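(* Let $f:\mathbb{R}^d\to\mathbb{R}$ be differentiable, bounded from below with infimum $f^{\mathrm{inf}}$, with $L$-Lipschitz gradient. Suppose the stochastic gradient $g$ satisfies $\mathbb{E}[g(x)]=\nabla f(x)$ and $\mathbb{E}\|g(x)\|^2\le 2A(f(x)-f^{\mathrm{inf}})+B\|\nabla f(x)\|^2+C$ for all $x$, with constants $A,B,C\ge0$. Run SGD $x_{k+1}=x_k-\gamma g(x_k)$ from $x_0\in\mathbb{R}^d$ with a constant stepsize $\gamma>0$ satisfying $\gamma\le\frac{1}{BL}$. Fix $w_{-1}>0$ and let $w_k=\frac{w_{-1}}{(1+L\gamma^2A)^{k+1}}$, $r_k=\mathbb{E}\|\nabla f(x_k)\|^2$, $\delta_k=\mathbb{E}[f(x_k)]-f^{\mathrm{inf}}$. Then for every integer $K\ge1$, $$\frac12\sum_{k=0}^{K-1}w_kr_k+\frac{w_{K-1}}{\gamma}\delta_K\le\frac{w_{-1}}{\gamma}\delta_0+\frac{LC}{2}\sum_{k=0}^{K-1}w_k\gamma.$$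
   Context: In SGD, at each iteration $g(x_k)$ is drawn with fresh randomness, independent of the past given $x_k$, so that $\mathbb{E}[g(x_k)\mid x_k]=\nabla f(x_k)$ and the second-moment bound holds conditionally on $x_k$. If $B=0$ the condition $\gamma\le 1/(BL)$ is vacuous. *)

theory Defs
  imports "HOL-Probability.Probability"
begin

fun sgd_iter :: "('x::real_vector \<Rightarrow> 'b \<Rightarrow> 'x) \<Rightarrow> real \<Rightarrow> 'x \<Rightarrow> nat \<Rightarrow> (nat \<Rightarrow> 'b) \<Rightarrow> 'x" where
  "sgd_iter G \<gamma> x0 0 \<omega> = x0"
| "sgd_iter G \<gamma> x0 (Suc k) \<omega> = sgd_iter G \<gamma> x0 k \<omega> - \<gamma> *\<^sub>R G (sgd_iter G \<gamma> x0 k \<omega>) (\<omega> k)"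

end

theory Submission
  imports Defs
begin

(*
  For an L-smooth f the descent inequality
    f (x - \<gamma> g) \<le> f x - \<gamma> <\<nabla>f x, g> + L \<gamma>^2/2 |g|^2
  holds pointwise. The noise \<omega> k driving step k is a fresh coordinate of the product space,
  independent of the iterate x_k, so it can be averaged out first; unbiasedness, the
  second-moment bound and \<gamma> B L \<le> 1 then give the one-step recursion
    \<delta>_(k+1) + \<gamma>/2 r_k \<le> (1 + L \<gamma>^2 A) \<delta>_k + L \<gamma>^2 C / 2,
  and multiplying it by w_k / \<gamma> makes the \<delta>-terms telescope.
  Integrability of f (x_k) is not assumed: the recursion is first proved for nonnegative
  integrals, where it yields integrability of the next iterate, so integrability follows
  by induction.
*)

lemma lipschitz_gradient_upper_bound:
  fixes f :: "'x::real_inner \<Rightarrow> real"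
  assumes deriv: "\<And>x. (f has_derivative (\<lambda>h. gradf x \<bullet> h)) (at x)"
    and lip: "\<And>x y. norm (gradf x - gradf y) \<le> L * norm (x - y)"
  shows "f (x + h) \<le> f x + gradf x \<bullet> h + L/2 * (norm h)\<^sup>2"
proof -
  define \<phi> where "\<phi> t = f (x + t *\<^sub>R h) - t * (gradf x \<bullet> h) - L/2 * t\<^sup>2 * (norm h)\<^sup>2" for t
  have \<phi>_deriv: "DERIV \<phi> t :> (gradf (x + t *\<^sub>R h) - gradf x) \<bullet> h - L * t * (norm h)\<^sup>2" for t
  proof -
    have "((\<lambda>t. f (x + t *\<^sub>R h)) has_derivative (\<lambda>s. gradf (x + t *\<^sub>R h) \<bullet> (s *\<^sub>R h))) (at t)"
      by (rule has_derivative_compose[OF _ deriv]) (auto intro!: derivative_eq_intros)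
    then have "((\<lambda>t. f (x + t *\<^sub>R h)) has_real_derivative gradf (x + t *\<^sub>R h) \<bullet> h) (at t)"
      by (simp add: has_field_derivative_def mult.commute[of _ "gradf _ \<bullet> h"])
    then show ?thesis unfolding \<phi>_def
      by (auto intro!: derivative_eq_intros simp: power2_eq_square inner_diff_left)
  qed
  have "\<phi> 1 \<le> \<phi> 0"
  proof (rule DERIV_nonpos_imp_nonincreasing[of 0 1])
    fix t :: real assume t: "0 \<le> t" "t \<le> 1"
    have "(gradf (x + t *\<^sub>R h) - gradf x) \<bullet> h \<le> norm (gradf (x + t *\<^sub>R h) - gradf x) * norm h"
      by (rule norm_cauchy_schwarz)
    also have "\<dots> \<le> L * norm (t *\<^sub>R h) * norm h"
      using lip[of "x + t *\<^sub>R h" x] by (intro mult_right_mono) auto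
    also have "\<dots> = L * t * (norm h)\<^sup>2"
      using t by (simp add: power2_eq_square)
    finally show "\<exists>y. DERIV \<phi> t :> y \<and> y \<le> 0"
      using \<phi>_deriv[of t] by (metis diff_le_0_iff_le)
  qed simp
  then show ?thesis unfolding \<phi>_def by simp
qed

lemma weighted_recursion_telescope:
  fixes \<delta> r :: "nat \<Rightarrow> real"
  assumes step: "\<And>k. \<delta> (Suc k) + \<gamma>/2 * r k \<le> q * \<delta> k + e * \<gamma>\<^sup>2"
    and q: "q > 0" and \<gamma>: "\<gamma> > 0" and w: "w > 0"
  shows "1/2 * (\<Sum>k<K. w / q^(k+1) * r k) + w / q^K / \<gamma> * \<delta> K
     \<le> w / \<gamma> * \<delta> 0 + e * (\<Sum>k<K. w / q^(k+1) * \<gamma>)"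
proof (induction K)
  case 0
  then show ?case by simp
next
  case (Suc K)
  define W where "W = w / q^(K+1) / \<gamma>"
  have "W > 0" unfolding W_def using q \<gamma> w by simp
  then have "W * (\<delta> (Suc K) + \<gamma>/2 * r K) \<le> W * (q * \<delta> K + e * \<gamma>\<^sup>2)"
    using step[of K] by (intro mult_left_mono) auto
  moreover have "W * (\<delta> (Suc K) + \<gamma>/2 * r K) = w / q^(Suc K) / \<gamma> * \<delta> (Suc K) + 1/2 * (w / q^(K+1) * r K)"
    unfolding W_def using \<gamma> q by (simp add: field_simps)
  moreover have "W * (q * \<delta> K + e * \<gamma>\<^sup>2) = w / q^K / \<gamma> * \<delta> K + e * (w / q^(K+1) * \<gamma>)"
    unfolding W_def using \<gamma> q by (simp add: field_simps power2_eq_square)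
  ultimately show ?case using Suc.IH by (simp add: algebra_simps)
qed

lemma sgd_iter_cong:
  "(\<And>j. j < k \<Longrightarrow> \<omega> j = \<omega>' j) \<Longrightarrow> sgd_iter G \<gamma> x0 k \<omega> = sgd_iter G \<gamma> x0 k \<omega>'"
  by (induction k) auto

lemma measurable_sgd_iter:
  fixes G :: "'x::euclidean_space \<Rightarrow> 'b \<Rightarrow> 'x"
  assumes G: "(\<lambda>(x, \<xi>). G x \<xi>) \<in> borel_measurable (borel \<Otimes>\<^sub>M D)"
    and k: "{..<k} \<subseteq> I"
  shows "sgd_iter G \<gamma> x0 k \<in> borel_measurable (PiM I (\<lambda>_. D))"
  using k
proof (induction k)
  case 0
  then show ?case by simp
next
  case (Suc k)
  then have "{..<k} \<subseteq> I" "k \<in> I"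
    by auto
  with Suc.IH have IH: "sgd_iter G \<gamma> x0 k \<in> borel_measurable (PiM I (\<lambda>_. D))"
    by blast
  with \<open>k \<in> I\<close> have "(\<lambda>\<omega>. (sgd_iter G \<gamma> x0 k \<omega>, \<omega> k)) \<in> measurable (PiM I (\<lambda>_. D)) (borel \<Otimes>\<^sub>M D)"
    by (intro measurable_Pair) auto
  from measurable_compose[OF this G] IH show ?case
    by simp
qed

lemma nn_integral_PiM_fresh_coordinate:
  fixes X :: "('i \<Rightarrow> 'b) \<Rightarrow> 'a"
  assumes M: "prob_space M" and k: "k \<in> I"
    and X: "X \<in> measurable (PiM I (\<lambda>_. M)) N"
    and X_fresh: "\<And>z \<xi>. X (z(k := \<xi>)) = X z"
    and h: "h \<in> borel_measurable (N \<Otimes>\<^sub>M M)"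
  shows "(\<integral>\<^sup>+z. h (X z, z k) \<partial>PiM I (\<lambda>_. M)) = (\<integral>\<^sup>+z. (\<integral>\<^sup>+\<xi>. h (X z, \<xi>) \<partial>M) \<partial>PiM I (\<lambda>_. M))"
proof -
  interpret M: prob_space M by fact
  define P where "P = PiM (I - {k}) (\<lambda>_. M)"
  interpret P: prob_space P unfolding P_def by (intro prob_space_PiM M)
  interpret pair_sigma_finite M P by unfold_locales
  have I: "insert k (I - {k}) = I" using k by auto
  have upd: "(\<lambda>(\<xi>, z). z(k := \<xi>)) \<in> measurable (M \<Otimes>\<^sub>M P) (PiM I (\<lambda>_. M))"
    unfolding P_def case_prod_beta using k by (intro measurable_fun_upd[where J = "I - {k}"]) auto
  have split: "(\<integral>\<^sup>+z. F z \<partial>PiM I (\<lambda>_. M)) = (\<integral>\<^sup>+z. (\<integral>\<^sup>+\<xi>. F (z(k := \<xi>)) \<partial>M) \<partial>P)"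
    if F: "F \<in> borel_measurable (PiM I (\<lambda>_. M))" for F
  proof -
    have "PiM I (\<lambda>_. M) = distr (M \<Otimes>\<^sub>M P) (PiM I (\<lambda>_. M)) (\<lambda>(\<xi>, z). z(k := \<xi>))"
      using distr_pair_PiM_eq_PiM[of "I - {k}" "\<lambda>_. M" k] M unfolding I P_def by simp
    then have "(\<integral>\<^sup>+z. F z \<partial>PiM I (\<lambda>_. M))
        = (\<integral>\<^sup>+z. F z \<partial>distr (M \<Otimes>\<^sub>M P) (PiM I (\<lambda>_. M)) (\<lambda>(\<xi>, z). z(k := \<xi>)))"
      by simp
    also have "\<dots> = (\<integral>\<^sup>+z. F ((\<lambda>(\<xi>, z). z(k := \<xi>)) z) \<partial>(M \<Otimes>\<^sub>M P))"
      by (rule nn_integral_distr[OF upd]) (simp add: F)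
    also have "\<dots> = (\<integral>\<^sup>+z. (\<integral>\<^sup>+\<xi>. F (z(k := \<xi>)) \<partial>M) \<partial>P)"
      by (subst nn_integral_snd[symmetric]) (auto intro: measurable_compose[OF upd F])
    finally show ?thesis .
  qed
  have "(\<lambda>z. h (X z, z k)) \<in> borel_measurable (PiM I (\<lambda>_. M))"
    using X k by (intro measurable_compose[OF _ h] measurable_Pair) auto
  moreover have "(\<lambda>z. \<integral>\<^sup>+\<xi>. h (X z, \<xi>) \<partial>M) \<in> borel_measurable (PiM I (\<lambda>_. M))"
    using h by (intro measurable_compose[OF X] M.borel_measurable_nn_integral) simp
  ultimately show ?thesis
    by (simp add: split X_fresh M.emeasure_space_1)
qed

lemma
  fixes u :: "'a \<Rightarrow> real"
  assumes u: "u \<in> borel_measurable M" "\<And>x. 0 \<le> u x"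
    and le: "(\<integral>\<^sup>+x. ennreal (u x) \<partial>M) \<le> ennreal c" and c: "0 \<le> c"
  shows integrable_of_nn_integral_le: "integrable M u"
    and integral_le_of_nn_integral_le: "(\<integral>x. u x \<partial>M) \<le> c"
proof -
  show int: "integrable M u"
    using u le by (intro integrableI_nonneg) (auto simp: top.not_eq_extremum le_less_trans)
  have "ennreal (\<integral>x. u x \<partial>M) \<le> ennreal c"
    using le int u by (simp add: nn_integral_eq_integral)
  then show "(\<integral>x. u x \<partial>M) \<le> c"
    using c by (simp add: ennreal_le_iff)
qed

lemma
  fixes a b :: "'a \<Rightarrow> real"
  assumes ab: "integrable M (\<lambda>x. a x + b x)"
    and meas: "a \<in> borel_measurable M" "b \<in> borel_measurable M"
    and nonneg: "\<And>x. 0 \<le> a x" "\<And>x. 0 \<le> b x"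
  shows integrable_add_nonnegD1: "integrable M a"
    and integrable_add_nonnegD2: "integrable M b"
  using nonneg
  by (auto intro!: Bochner_Integration.integrable_bound[OF ab] meas AE_I2)

locale sgd_setting = prob_space D
  for D :: "'b measure" +
  fixes f :: "'x::euclidean_space \<Rightarrow> real"
    and gradf :: "'x \<Rightarrow> 'x"
    and G :: "'x \<Rightarrow> 'b \<Rightarrow> 'x"
    and L A B C \<gamma> :: real
  assumes has_derivative_f: "\<And>x. (f has_derivative (\<lambda>h. gradf x \<bullet> h)) (at x)"
    and bdd_below_f: "bdd_below (range f)"
    and lipschitz_gradf: "\<And>x y. norm (gradf x - gradf y) \<le> L * norm (x - y)"
    and A_nonneg: "A \<ge> 0"
    and B_nonneg: "B \<ge> 0"
    and C_nonneg: "C \<ge> 0"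
    and measurable_G: "(\<lambda>(x, \<xi>). G x \<xi>) \<in> borel_measurable (borel \<Otimes>\<^sub>M D)"
    and unbiased: "\<And>x. integrable D (G x) \<and> (\<integral>\<xi>. G x \<xi> \<partial>D) = gradf x"
    and second_moment: "\<And>x. (\<integral>\<^sup>+\<xi>. ennreal ((norm (G x \<xi>))\<^sup>2) \<partial>D)
        \<le> ennreal (2 * A * (f x - (INF z. f z)) + B * (norm (gradf x))\<^sup>2 + C)"
    and stepsize_pos: "\<gamma> > 0"
    and stepsize_le: "\<gamma> * (B * L) \<le> 1"
begin

abbreviation f_inf :: real where "f_inf \<equiv> INF z. f z"

lemma f_inf_le: "f_inf \<le> f y"
  using bdd_below_f by (rule cINF_lower) simp

lemma L_nonneg: "L \<ge> 0"
proof -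
  obtain b :: 'x where "b \<in> Basis" using nonempty_Basis by blast
  then have "b \<noteq> 0" by auto
  moreover have "0 \<le> L * norm (b - 0)"
    using lipschitz_gradf[of b 0] norm_ge_zero order_trans by blast
  ultimately show ?thesis by (simp add: zero_le_mult_iff)
qed

lemma borel_measurable_f [measurable]: "f \<in> borel_measurable borel"
  using has_derivative_f
  by (intro borel_measurable_continuous_onI continuous_at_imp_continuous_on)
     (blast intro: has_derivative_continuous)

lemma borel_measurable_gradf [measurable]: "gradf \<in> borel_measurable borel"
proof (intro borel_measurable_continuous_onI lipschitz_on_continuous_on)
  show "L-lipschitz_on UNIV gradf"
    using L_nonneg lipschitz_gradf by (simp add: lipschitz_on_def dist_norm)
qed

lemma borel_measurable_G [measurable]: "G y \<in> borel_measurable D"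
proof -
  have "(\<lambda>\<xi>. (y, \<xi>)) \<in> measurable D (borel \<Otimes>\<^sub>M D)"
    by simp
  from measurable_compose[OF this measurable_G] show ?thesis
    by simp
qed

lemma
  shows integrable_second_moment: "integrable D (\<lambda>\<xi>. (norm (G y \<xi>))\<^sup>2)"
    and second_moment_le: "(\<integral>\<xi>. (norm (G y \<xi>))\<^sup>2 \<partial>D) \<le> 2 * A * (f y - f_inf) + B * (norm (gradf y))\<^sup>2 + C"
proof -
  have "0 \<le> 2 * A * (f y - f_inf) + B * (norm (gradf y))\<^sup>2 + C"
    using A_nonneg B_nonneg C_nonneg f_inf_le[of y] by simp
  note le = second_moment[of y] and c = this
  have meas: "(\<lambda>\<xi>. (norm (G y \<xi>))\<^sup>2) \<in> borel_measurable D"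
    by measurable
  show "integrable D (\<lambda>\<xi>. (norm (G y \<xi>))\<^sup>2)"
    by (rule integrable_of_nn_integral_le[OF meas _ le c]) simp
  show "(\<integral>\<xi>. (norm (G y \<xi>))\<^sup>2 \<partial>D) \<le> 2 * A * (f y - f_inf) + B * (norm (gradf y))\<^sup>2 + C"
    by (rule integral_le_of_nn_integral_le[OF meas _ le c]) simp
qed

lemma
  shows integrable_sgd_step: "integrable D (\<lambda>\<xi>. f (y - \<gamma> *\<^sub>R G y \<xi>))"
    and expected_sgd_step_le: "(\<integral>\<xi>. f (y - \<gamma> *\<^sub>R G y \<xi>) \<partial>D) - f_inf + \<gamma>/2 * (norm (gradf y))\<^sup>2
      \<le> (1 + L * \<gamma>\<^sup>2 * A) * (f y - f_inf) + L * \<gamma>\<^sup>2 * C / 2"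
proof -
  have G_int: "integrable D (G y)" and G_mean: "(\<integral>\<xi>. G y \<xi> \<partial>D) = gradf y"
    using unbiased[of y] by auto
  define b where "b \<xi> = f y - \<gamma> * (gradf y \<bullet> G y \<xi>) + L * \<gamma>\<^sup>2 / 2 * (norm (G y \<xi>))\<^sup>2" for \<xi>
  have le_b: "f (y - \<gamma> *\<^sub>R G y \<xi>) \<le> b \<xi>" for \<xi>
    using lipschitz_gradient_upper_bound[OF has_derivative_f lipschitz_gradf, of y "- \<gamma> *\<^sub>R G y \<xi>"]
    using stepsize_pos by (simp add: b_def power_mult_distrib algebra_simps)
  have b_int: "integrable D b"
    unfolding b_def using G_int integrable_second_moment by auto
  have "integrable D (\<lambda>\<xi>. f (y - \<gamma> *\<^sub>R G y \<xi>) - f_inf)"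
    using f_inf_le le_b
    by (intro Bochner_Integration.integrable_bound[OF Bochner_Integration.integrable_diff[OF b_int integrable_const[of f_inf]]])
       (auto intro!: AE_I2 intro: order_trans[OF _ abs_ge_self])
  from Bochner_Integration.integrable_add[OF this integrable_const[of f_inf]]
  show int: "integrable D (\<lambda>\<xi>. f (y - \<gamma> *\<^sub>R G y \<xi>))"
    by simp
  have "(\<integral>\<xi>. f (y - \<gamma> *\<^sub>R G y \<xi>) \<partial>D) \<le> (\<integral>\<xi>. b \<xi> \<partial>D)"
    by (rule integral_mono[OF int b_int le_b])
  also have "\<dots> = f y - \<gamma> * (norm (gradf y))\<^sup>2 + L * \<gamma>\<^sup>2 / 2 * (\<integral>\<xi>. (norm (G y \<xi>))\<^sup>2 \<partial>D)"
    unfolding b_def using G_int G_mean integrable_second_moment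
    by (simp add: power2_norm_eq_inner prob_space)
  also have "\<dots> \<le> f y - \<gamma> * (norm (gradf y))\<^sup>2
      + L * \<gamma>\<^sup>2 / 2 * (2 * A * (f y - f_inf) + B * (norm (gradf y))\<^sup>2 + C)"
    using second_moment_le L_nonneg by (intro add_left_mono mult_left_mono) auto
  finally have "(\<integral>\<xi>. f (y - \<gamma> *\<^sub>R G y \<xi>) \<partial>D) \<le> \<dots>" .
  moreover have "\<gamma> * (norm (gradf y))\<^sup>2 * (\<gamma> * (B * L)) \<le> \<gamma> * (norm (gradf y))\<^sup>2"
    using stepsize_le stepsize_pos by (simp add: mult_left_le)
  ultimately show "(\<integral>\<xi>. f (y - \<gamma> *\<^sub>R G y \<xi>) \<partial>D) - f_inf + \<gamma>/2 * (norm (gradf y))\<^sup>2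
      \<le> (1 + L * \<gamma>\<^sup>2 * A) * (f y - f_inf) + L * \<gamma>\<^sup>2 * C / 2"
    by (simp add: algebra_simps power2_eq_square)
qed

lemma nn_integral_sgd_step_le:
  "(\<integral>\<^sup>+\<xi>. ennreal (f (y - \<gamma> *\<^sub>R G y \<xi>) - f_inf + \<gamma>/2 * (norm (gradf y))\<^sup>2) \<partial>D)
    \<le> ennreal ((1 + L * \<gamma>\<^sup>2 * A) * (f y - f_inf) + L * \<gamma>\<^sup>2 * C / 2)"
proof -
  have "(\<integral>\<^sup>+\<xi>. ennreal (f (y - \<gamma> *\<^sub>R G y \<xi>) - f_inf + \<gamma>/2 * (norm (gradf y))\<^sup>2) \<partial>D)
      = ennreal ((\<integral>\<xi>. f (y - \<gamma> *\<^sub>R G y \<xi>) \<partial>D) - f_inf + \<gamma>/2 * (norm (gradf y))\<^sup>2)"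
    using integrable_sgd_step f_inf_le stepsize_pos
    by (subst nn_integral_eq_integral) (auto intro!: add_nonneg_nonneg simp: prob_space)
  then show ?thesis
    using expected_sgd_step_le by (simp add: ennreal_leI)
qed

abbreviation \<Omega> :: "(nat \<Rightarrow> 'b) measure" where "\<Omega> \<equiv> PiM UNIV (\<lambda>_. D)"

lemma prob_space_\<Omega>: "prob_space \<Omega>"
  by (intro prob_space_PiM prob_space_axioms)

lemma borel_measurable_sgd_iter [measurable]: "sgd_iter G \<gamma> x0 k \<in> borel_measurable \<Omega>"
  using measurable_G by (rule measurable_sgd_iter) simp

lemma nn_integral_sgd_iter_step_le:
  "(\<integral>\<^sup>+\<omega>. ennreal (f (sgd_iter G \<gamma> x0 (Suc k) \<omega>) - f_inf + \<gamma>/2 * (norm (gradf (sgd_iter G \<gamma> x0 k \<omega>)))\<^sup>2) \<partial>\<Omega>)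
    \<le> (\<integral>\<^sup>+\<omega>. ennreal ((1 + L * \<gamma>\<^sup>2 * A) * (f (sgd_iter G \<gamma> x0 k \<omega>) - f_inf) + L * \<gamma>\<^sup>2 * C / 2) \<partial>\<Omega>)"
proof -
  define h where "h = (\<lambda>(y, \<xi>). ennreal (f (y - \<gamma> *\<^sub>R G y \<xi>) - f_inf + \<gamma>/2 * (norm (gradf y))\<^sup>2))"
  have h: "h \<in> borel_measurable (borel \<Otimes>\<^sub>M D)"
    unfolding h_def case_prod_beta using measurable_G by measurable
  have "(\<integral>\<^sup>+\<omega>. ennreal (f (sgd_iter G \<gamma> x0 (Suc k) \<omega>) - f_inf + \<gamma>/2 * (norm (gradf (sgd_iter G \<gamma> x0 k \<omega>)))\<^sup>2) \<partial>\<Omega>)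
      = (\<integral>\<^sup>+\<omega>. h (sgd_iter G \<gamma> x0 k \<omega>, \<omega> k) \<partial>\<Omega>)"
    by (simp add: h_def)
  also have "\<dots> = (\<integral>\<^sup>+\<omega>. (\<integral>\<^sup>+\<xi>. h (sgd_iter G \<gamma> x0 k \<omega>, \<xi>) \<partial>D) \<partial>\<Omega>)"
    by (rule nn_integral_PiM_fresh_coordinate[OF prob_space_axioms _ _ _ h])
       (auto intro: sgd_iter_cong)
  also have "\<dots> \<le> (\<integral>\<^sup>+\<omega>. ennreal ((1 + L * \<gamma>\<^sup>2 * A) * (f (sgd_iter G \<gamma> x0 k \<omega>) - f_inf) + L * \<gamma>\<^sup>2 * C / 2) \<partial>\<Omega>)"
    unfolding h_def prod.case by (intro nn_integral_mono nn_integral_sgd_step_le)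
  finally show ?thesis .
qed

lemma
  assumes int_f: "integrable \<Omega> (\<lambda>\<omega>. f (sgd_iter G \<gamma> x0 k \<omega>))"
  shows integrable_sgd_iter_step:
      "integrable \<Omega> (\<lambda>\<omega>. f (sgd_iter G \<gamma> x0 (Suc k) \<omega>) - f_inf
        + \<gamma>/2 * (norm (gradf (sgd_iter G \<gamma> x0 k \<omega>)))\<^sup>2)"
    and integral_sgd_iter_step_le:
      "(\<integral>\<omega>. f (sgd_iter G \<gamma> x0 (Suc k) \<omega>) - f_inf + \<gamma>/2 * (norm (gradf (sgd_iter G \<gamma> x0 k \<omega>)))\<^sup>2 \<partial>\<Omega>)
      \<le> (\<integral>\<omega>. (1 + L * \<gamma>\<^sup>2 * A) * (f (sgd_iter G \<gamma> x0 k \<omega>) - f_inf) + L * \<gamma>\<^sup>2 * C / 2 \<partial>\<Omega>)"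
proof -
  define u where "u \<omega> = f (sgd_iter G \<gamma> x0 (Suc k) \<omega>) - f_inf
    + \<gamma>/2 * (norm (gradf (sgd_iter G \<gamma> x0 k \<omega>)))\<^sup>2" for \<omega>
  define v where "v \<omega> = (1 + L * \<gamma>\<^sup>2 * A) * (f (sgd_iter G \<gamma> x0 k \<omega>) - f_inf) + L * \<gamma>\<^sup>2 * C / 2" for \<omega>
  have u_nonneg: "0 \<le> u \<omega>" for \<omega>
    unfolding u_def using f_inf_le stepsize_pos by (intro add_nonneg_nonneg) auto
  have v_nonneg: "0 \<le> v \<omega>" for \<omega>
    unfolding v_def using f_inf_le L_nonneg A_nonneg C_nonneg by simp
  have "integrable \<Omega> v"
    unfolding v_def using int_f prob_space_\<Omega> by (simp add: finite_measure.integrable_const prob_space_def)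
  have "(\<integral>\<^sup>+\<omega>. ennreal (u \<omega>) \<partial>\<Omega>) \<le> (\<integral>\<^sup>+\<omega>. ennreal (v \<omega>) \<partial>\<Omega>)"
    unfolding u_def v_def by (rule nn_integral_sgd_iter_step_le)
  also have "\<dots> = ennreal (\<integral>\<omega>. v \<omega> \<partial>\<Omega>)"
    using \<open>integrable \<Omega> v\<close> v_nonneg by (intro nn_integral_eq_integral) auto
  finally have u_le_v: "(\<integral>\<^sup>+\<omega>. ennreal (u \<omega>) \<partial>\<Omega>) \<le> ennreal (\<integral>\<omega>. v \<omega> \<partial>\<Omega>)" .
  have u_meas: "u \<in> borel_measurable \<Omega>"
    unfolding u_def by measurable
  have v_integral_nonneg: "0 \<le> (\<integral>\<omega>. v \<omega> \<partial>\<Omega>)"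
    using v_nonneg by (intro integral_nonneg_AE AE_I2)
  show "integrable \<Omega> u"
    by (rule integrable_of_nn_integral_le[OF u_meas u_nonneg u_le_v v_integral_nonneg])
  show "(\<integral>\<omega>. u \<omega> \<partial>\<Omega>) \<le> (\<integral>\<omega>. v \<omega> \<partial>\<Omega>)"
    by (rule integral_le_of_nn_integral_le[OF u_meas u_nonneg u_le_v v_integral_nonneg])
qed

lemma
  assumes int_f: "integrable \<Omega> (\<lambda>\<omega>. f (sgd_iter G \<gamma> x0 k \<omega>))"
  shows integrable_f_sgd_iter_Suc: "integrable \<Omega> (\<lambda>\<omega>. f (sgd_iter G \<gamma> x0 (Suc k) \<omega>))"
    and expectation_sgd_iter_step_le:
      "(\<integral>\<omega>. f (sgd_iter G \<gamma> x0 (Suc k) \<omega>) \<partial>\<Omega>) - f_inf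
        + \<gamma>/2 * (\<integral>\<omega>. (norm (gradf (sgd_iter G \<gamma> x0 k \<omega>)))\<^sup>2 \<partial>\<Omega>)
      \<le> (1 + L * \<gamma>\<^sup>2 * A) * ((\<integral>\<omega>. f (sgd_iter G \<gamma> x0 k \<omega>) \<partial>\<Omega>) - f_inf) + L * C / 2 * \<gamma>\<^sup>2"
proof -
  interpret \<Omega>: prob_space \<Omega>
    by (rule prob_space_\<Omega>)
  have summand1_meas: "(\<lambda>\<omega>. f (sgd_iter G \<gamma> x0 (Suc k) \<omega>) - f_inf) \<in> borel_measurable \<Omega>"
    by measurable
  have summand2_meas: "(\<lambda>\<omega>. \<gamma>/2 * (norm (gradf (sgd_iter G \<gamma> x0 k \<omega>)))\<^sup>2) \<in> borel_measurable \<Omega>"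
    by measurable
  have summands_nonneg:
    "0 \<le> f (sgd_iter G \<gamma> x0 (Suc k) \<omega>) - f_inf"
    "0 \<le> \<gamma>/2 * (norm (gradf (sgd_iter G \<gamma> x0 k \<omega>)))\<^sup>2" for \<omega>
    using f_inf_le stepsize_pos by simp_all
  note summands = integrable_sgd_iter_step[OF int_f] summand1_meas summand2_meas summands_nonneg
  from Bochner_Integration.integrable_add[OF integrable_add_nonnegD1[OF summands] \<Omega>.integrable_const[of f_inf]]
  show int_f_Suc: "integrable \<Omega> (\<lambda>\<omega>. f (sgd_iter G \<gamma> x0 (Suc k) \<omega>))"
    by simp
  from integrable_add_nonnegD2[OF summands]
  have int_gradf: "integrable \<Omega> (\<lambda>\<omega>. (norm (gradf (sgd_iter G \<gamma> x0 k \<omega>)))\<^sup>2)"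
    using stepsize_pos by (subst (asm) integrable_mult_left_iff) simp
  from integral_sgd_iter_step_le[OF int_f]
  show "(\<integral>\<omega>. f (sgd_iter G \<gamma> x0 (Suc k) \<omega>) \<partial>\<Omega>) - f_inf
        + \<gamma>/2 * (\<integral>\<omega>. (norm (gradf (sgd_iter G \<gamma> x0 k \<omega>)))\<^sup>2 \<partial>\<Omega>)
      \<le> (1 + L * \<gamma>\<^sup>2 * A) * ((\<integral>\<omega>. f (sgd_iter G \<gamma> x0 k \<omega>) \<partial>\<Omega>) - f_inf) + L * C / 2 * \<gamma>\<^sup>2"
    using int_f int_f_Suc int_gradf by (simp add: \<Omega>.prob_space algebra_simps power2_eq_square)
qed

lemma integrable_f_sgd_iter: "integrable \<Omega> (\<lambda>\<omega>. f (sgd_iter G \<gamma> x0 k \<omega>))"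
proof (induction k)
  case 0
  interpret \<Omega>: prob_space \<Omega>
    by (rule prob_space_\<Omega>)
  show ?case
    by simp
next
  case (Suc k)
  then show ?case by (rule integrable_f_sgd_iter_Suc)
qed

end

theorem lemma2:
  fixes f :: "'x::euclidean_space \<Rightarrow> real"
    and gradf :: "'x \<Rightarrow> 'x"
    and D :: "'b measure"
    and G :: "'x \<Rightarrow> 'b \<Rightarrow> 'x"
    and L A B C \<gamma> wm1 :: real
    and x0 :: 'x
    and K :: nat
  assumes deriv: "\<And>x. (f has_derivative (\<lambda>h. gradf x \<bullet> h)) (at x)"
    and bdd: "bdd_below (range f)"
    and lip: "\<And>x y. norm (gradf x - gradf y) \<le> L * norm (x - y)"
    and ABC: "A \<ge> 0" "B \<ge> 0" "C \<ge> 0"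
    and D_prob: "prob_space D"
    and G_meas: "(\<lambda>(x, \<xi>). G x \<xi>) \<in> borel_measurable (borel \<Otimes>\<^sub>M D)"
    and unbiased: "\<And>x. integrable D (G x) \<and> (\<integral>\<xi>. G x \<xi> \<partial>D) = gradf x"
    and second_moment: "\<And>x. (\<integral>\<^sup>+\<xi>. ennreal ((norm (G x \<xi>))\<^sup>2) \<partial>D)
        \<le> ennreal (2 * A * (f x - (INF z. f z)) + B * (norm (gradf x))\<^sup>2 + C)"
    and \<gamma>_pos: "\<gamma> > 0"
    and \<gamma>_le: "\<gamma> * (B * L) \<le> 1"
    and wm1_pos: "wm1 > 0"
    and K: "K \<ge> 1"
  shows
    "let \<Omega> = PiM UNIV (\<lambda>_::nat. D);
         x = sgd_iter G \<gamma> x0;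
         w = (\<lambda>k::nat. wm1 / (1 + L * \<gamma>\<^sup>2 * A) ^ (k + 1));
         r = (\<lambda>k. \<integral>\<omega>. (norm (gradf (x k \<omega>)))\<^sup>2 \<partial>\<Omega>);
         \<delta> = (\<lambda>k. (\<integral>\<omega>. f (x k \<omega>) \<partial>\<Omega>) - (INF z. f z))
     in 1/2 * (\<Sum>k<K. w k * r k) + w (K - 1) / \<gamma> * \<delta> K
        \<le> wm1 / \<gamma> * \<delta> 0 + L * C / 2 * (\<Sum>k<K. w k * \<gamma>)"
proof -
  interpret sgd_setting D f gradf G L A B C \<gamma>
    by (intro sgd_setting.intro sgd_setting_axioms.intro D_prob) (rule assms)+
  have "1 + L * \<gamma>\<^sup>2 * A > 0"
    using L_nonneg ABC by (simp add: add_pos_nonneg)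
  define \<delta> where "\<delta> k = (\<integral>\<omega>. f (sgd_iter G \<gamma> x0 k \<omega>) \<partial>\<Omega>) - f_inf" for k
  define r where "r k = (\<integral>\<omega>. (norm (gradf (sgd_iter G \<gamma> x0 k \<omega>)))\<^sup>2 \<partial>\<Omega>)" for k
  have "\<delta> (Suc k) + \<gamma>/2 * r k \<le> (1 + L * \<gamma>\<^sup>2 * A) * \<delta> k + L * C / 2 * \<gamma>\<^sup>2" for k
    unfolding \<delta>_def r_def by (rule expectation_sgd_iter_step_le[OF integrable_f_sgd_iter])
  from weighted_recursion_telescope[where \<delta> = \<delta> and r = r, OF this \<open>1 + L * \<gamma>\<^sup>2 * A > 0\<close> \<gamma>_pos wm1_pos]
  have "1/2 * (\<Sum>k<K. wm1 / (1 + L * \<gamma>\<^sup>2 * A)^(k+1) * r k)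
      + wm1 / (1 + L * \<gamma>\<^sup>2 * A)^K / \<gamma> * \<delta> K
    \<le> wm1 / \<gamma> * \<delta> 0 + L * C / 2 * (\<Sum>k<K. wm1 / (1 + L * \<gamma>\<^sup>2 * A)^(k+1) * \<gamma>)" .
  moreover have "K - 1 + 1 = K"
    using K by simp
  ultimately show ?thesis
    unfolding Let_def \<delta>_def r_def by simp
qed

end
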